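(* Assume $h_1=0$. Let $\nu$ range over Borel probability measures on $D$. Then $$\min_{\nu}\frac{\big(\int_D h_0\mu\,\nu(d\mu\,d\sigma)\big)^2}{\int_D(\mu^2+\sigma^2)\,\nu(d\mu\,d\sigma)}=\begin{cases}\dfrac{h_0^2\mu_-^2}{\mu_-^2+\sigma_+^2},&\text{if } \mu_+\mu_--2\sigma_+^2\le\mu_-^2,\\[2mm] \dfrac{\mu_+\mu_--\sigma_+^2}{\mu_M^2}\,h_0^2,&\text{if } \mu_-^2<\mu_+\mu_--2\sigma_+^2.\end{cases}$$ The unique minimizer $\pi^*$ of $\pi\mapsto\max_{(\mu,\sigma)\in D}F(\pi,\mu,\sigma)$ is $$\pi^*=\begin{cases}\dfrac{h_0\mu_-}{\mu_-^2+\sigma_+^2},&\text{if } \mu_+\mu_--2\sigma_+^2\le\mu_-^2,\\[2mm] \dfrac{h_0}{\mu_M},&\text{if } \mu_-^2<\mu_+\mu_--2\sigma_+^2.\end{cases}$$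
   Context: Let $0<\mu_-<\mu_+$ and $0<\sigma_-<\sigma_+$ be real numbers, $D=[\mu_-,\mu_+]\times[\sigma_-,\sigma_+]$, and $h_0,h_1\in\mathbb R$. For $\pi\in\mathbb R$ and $(\mu,\sigma)\in D$ put $F(\pi,\mu,\sigma)=(h_0-\pi\mu)^2+(h_1-\pi\sigma)^2$. Write $\mu_M=(\mu_++\mu_-)/2$. *)

theory Defs
  imports "HOL-Probability.Probability"
begin

definition Dom :: "real \<Rightarrow> real \<Rightarrow> real \<Rightarrow> real \<Rightarrow> (real \<times> real) set" where
  "Dom mu_m mu_p s_m s_p = {mu_m..mu_p} \<times> {s_m..s_p}"

definition F :: "real \<Rightarrow> real \<Rightarrow> real \<Rightarrow> real \<Rightarrow> real \<Rightarrow> real" where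
  "F h0 h1 \<pi> \<mu> \<sigma> = (h0 - \<pi> * \<mu>)\<^sup>2 + (h1 - \<pi> * \<sigma>)\<^sup>2"

text \<open>Worst case value pi |-> max over D of F(pi,mu,sigma) (D is compact, F continuous,
  so the supremum is a maximum).\<close>
definition worst :: "real \<Rightarrow> real \<Rightarrow> (real \<times> real) set \<Rightarrow> real \<Rightarrow> real" where
  "worst h0 h1 D \<pi> = (SUP p\<in>D. F h0 h1 \<pi> (fst p) (snd p))"

definition probs_on :: "(real \<times> real) set \<Rightarrow> (real \<times> real) measure set" where
  "probs_on D = {\<nu>. prob_space \<nu> \<and> sets \<nu> = sets (restrict_space borel D)}"

definition ratio :: "real \<Rightarrow> (real \<times> real) measure \<Rightarrow> real" where
  "ratio h0 \<nu> = (\<integral>p. h0 * fst p \<partial>\<nu>)\<^sup>2 / (\<integral>p. (fst p)\<^sup>2 + (snd p)\<^sup>2 \<partial>\<nu>)"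

end

theory Submission
  imports Defs
begin

(*
  Proof idea.  Write a = mu_m, b = mu_p, s = s_p and set h1 = 0.

  F(pi,mu,sigma) = (h0 - pi mu)^2 + pi^2 sigma^2 is convex in mu and
  increasing in sigma^2, so its maximum over D is attained on the edge sigma = s at an endpoint
  mu = a or mu = b.  The resulting function  max((h0-pi a)^2,(h0-pi b)^2) + pi^2 s^2  of pi is
  minimised strictly at pi* by a direct quadratic expansion around pi*, separately in the two
  regimes of the theorem.

  For a probability measure nu on D with mean m of mu we have a <= m <= b,
  E[mu^2] <= (a+b) m - a b (since (mu-a)(b-mu) >= 0) and E[sigma^2] <= s^2, hence
  ratio(nu) >= h0^2 * mean_bound(m) with mean_bound(m) = m^2 / ((a+b) m - a b + s^2).
  Conversely every such bound is attained by a two-point measure on {(a,s),(b,s)}.  So the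
  minimal ratio is h0^2 times the minimum of mean_bound over [a,b], which is reached at m = a
  in the first regime and at m = 2(ab - s^2)/(a+b) in the second.
*)

section \<open>The worst case over the domain\<close>

text \<open>With h1 = 0 the worst case over D is attained on the top edge, at one of its endpoints.\<close>
definition worst_edge :: "real \<Rightarrow> real \<Rightarrow> real \<Rightarrow> real \<Rightarrow> real \<Rightarrow> real" where
  "worst_edge a b s h0 p = max ((h0 - p*a)\<^sup>2) ((h0 - p*b)\<^sup>2) + p\<^sup>2 * s\<^sup>2"

definition opt_pi :: "real \<Rightarrow> real \<Rightarrow> real \<Rightarrow> real \<Rightarrow> real" where
  "opt_pi a b s h0 = (if b * a - 2 * s\<^sup>2 \<le> a\<^sup>2 then h0 * a / (a\<^sup>2 + s\<^sup>2) else h0 / ((b + a) / 2))"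

lemma square_between_le_max:
  fixes x u v :: real
  assumes "min u v \<le> x" "x \<le> max u v"
  shows "x\<^sup>2 \<le> max (u\<^sup>2) (v\<^sup>2)"
proof -
  have "\<bar>x\<bar> \<le> \<bar>u\<bar> \<or> \<bar>x\<bar> \<le> \<bar>v\<bar>" using assms by linarith
  hence "\<bar>x\<bar>\<^sup>2 \<le> \<bar>u\<bar>\<^sup>2 \<or> \<bar>x\<bar>\<^sup>2 \<le> \<bar>v\<bar>\<^sup>2" by (metis abs_ge_zero power_mono)
  thus ?thesis by (simp only: power2_abs) linarith
qed

text \<open>Since F is convex in mu and increasing in sigma^2, the supremum over the rectangle is the
  value at the better of the two top corners.\<close>
lemma worst_Dom:
  fixes a b sm sp h0 p :: real
  assumes "0 < a" "a < b" "0 < sm" "sm < sp"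
  shows "worst h0 0 (Dom a b sm sp) p = worst_edge a b sp h0 p"
  unfolding worst_def worst_edge_def
proof (rule cSup_eq_maximum)
  let ?W = "max ((h0-p*a)\<^sup>2) ((h0-p*b)\<^sup>2) + p\<^sup>2 * sp\<^sup>2"
  have corners: "(a,sp) \<in> Dom a b sm sp" "(b,sp) \<in> Dom a b sm sp"
    using assms by (auto simp: Dom_def)
  have "?W = F h0 0 p a sp \<or> ?W = F h0 0 p b sp"
    by (auto simp: F_def power_mult_distrib max_def)
  thus "?W \<in> (\<lambda>q. F h0 0 p (fst q) (snd q)) ` Dom a b sm sp"
    using corners by force
  fix y assume "y \<in> (\<lambda>q. F h0 0 p (fst q) (snd q)) ` Dom a b sm sp"
  then obtain mu sg where q: "a \<le> mu" "mu \<le> b" "sm \<le> sg" "sg \<le> sp"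
    and y: "y = F h0 0 p mu sg"
    by (auto simp: Dom_def)
  have "min (h0-p*a) (h0-p*b) \<le> h0-p*mu \<and> h0-p*mu \<le> max (h0-p*a) (h0-p*b)"
  proof (cases "p \<ge> 0")
    case True
    hence "p*a \<le> p*mu" "p*mu \<le> p*b" using q by (auto intro: mult_left_mono)
    thus ?thesis by linarith
  next
    case False
    hence "p*mu \<le> p*a" "p*b \<le> p*mu" using q by (auto intro: mult_left_mono_neg)
    thus ?thesis by linarith
  qed
  hence mu_part: "(h0-p*mu)\<^sup>2 \<le> max ((h0-p*a)\<^sup>2) ((h0-p*b)\<^sup>2)"
    using square_between_le_max by blast
  have "sg\<^sup>2 \<le> sp\<^sup>2" using q assms by (intro power_mono) auto
  hence "p\<^sup>2 * sg\<^sup>2 \<le> p\<^sup>2 * sp\<^sup>2" by (intro mult_left_mono) auto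
  thus "y \<le> ?W" using mu_part y by (simp add: F_def power_mult_distrib)
qed

text \<open>First regime: the a-endpoint dominates at q, and the a-branch grows quadratically
  around its own minimiser q.\<close>
lemma worst_edge_strict_min_left:
  fixes a b s h0 p q :: real
  assumes "0 < a" "a < b" "0 < s" "b * a - 2 * s\<^sup>2 \<le> a\<^sup>2"
    and q: "q = h0 * a / (a\<^sup>2 + s\<^sup>2)" and "p \<noteq> q"
  shows "worst_edge a b s h0 q < worst_edge a b s h0 p"
proof -
  define X where "X = a\<^sup>2 + s\<^sup>2"
  have X: "X > 0" unfolding X_def using assms by (simp add: add_pos_pos)
  have Xq: "X*q = h0*a" unfolding q X_def[symmetric] using X by simp
  have at_a: "h0 - q*a = h0 * s\<^sup>2 / X"
  proof -
    have "(h0 - q*a)*X = h0*X - a*(X*q)" by (simp add: algebra_simps)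
    also have "\<dots> = h0*X - a*(h0*a)" using Xq by simp
    also have "\<dots> = h0 * s\<^sup>2" unfolding X_def by (simp add: algebra_simps power2_eq_square)
    finally show ?thesis using X by (simp add: field_simps)
  qed
  have at_b: "h0 - q*b = h0*(X - a*b)/X"
  proof -
    have "(h0 - q*b)*X = h0*(X - a*b)" using Xq by (simp add: algebra_simps)
    thus ?thesis using X by (simp add: field_simps)
  qed
  have "a*a \<le> a*b" using assms by (intro mult_left_mono) auto
  moreover have "a*b - a\<^sup>2 \<le> 2 * s\<^sup>2" using assms by (simp add: mult.commute)
  ultimately have "\<bar>X - a*b\<bar> \<le> \<bar>s\<^sup>2\<bar>"
    unfolding X_def by (simp add: power2_eq_square abs_le_iff)
  hence "(X - a*b)\<^sup>2 \<le> (s\<^sup>2)\<^sup>2" by (simp only: abs_le_square_iff)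
  hence "h0\<^sup>2*(X - a*b)\<^sup>2/X\<^sup>2 \<le> h0\<^sup>2*(s\<^sup>2)\<^sup>2/X\<^sup>2"
    by (intro divide_right_mono mult_left_mono) auto
  hence a_dominates: "(h0-q*b)\<^sup>2 \<le> (h0-q*a)\<^sup>2"
    unfolding at_a at_b by (simp add: power_mult_distrib power_divide)
  have "(h0-p*a)\<^sup>2 + p\<^sup>2 * s\<^sup>2 - ((h0-q*a)\<^sup>2 + q\<^sup>2 * s\<^sup>2 + X*(p-q)\<^sup>2) = 2*(p-q)*(X*q - h0*a)"
    unfolding X_def by (simp add: algebra_simps power2_eq_square)
  hence expand: "(h0-p*a)\<^sup>2 + p\<^sup>2 * s\<^sup>2 = (h0-q*a)\<^sup>2 + q\<^sup>2 * s\<^sup>2 + X*(p-q)\<^sup>2"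
    using Xq by simp
  have "X*(p-q)\<^sup>2 > 0" using X assms by simp
  thus ?thesis using a_dominates expand unfolding worst_edge_def
    by (smt (verit) max.cobounded1 max_def)
qed

text \<open>Second regime: at q both endpoints are equally bad, and moving away from q increases
  the a-branch or the b-branch to first order, according to the sign of h0 (p - q).\<close>
lemma worst_edge_strict_min_mid:
  fixes a b s h0 p q :: real
  assumes "0 < a" "a < b" "0 < s" "a\<^sup>2 < b * a - 2 * s\<^sup>2"
    and q: "q = h0 / ((b + a) / 2)" and "p \<noteq> q"
  shows "worst_edge a b s h0 q < worst_edge a b s h0 p"
proof -
  define c where "c = a + b"
  have c: "c > 0" using assms unfolding c_def by simp
  have q2: "q = 2*h0/c" unfolding q c_def by (simp add: add.commute)
  define u where "u = h0 - q*a"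
  define t where "t = p - q"
  have "t \<noteq> 0" using assms unfolding t_def by simp
  hence t2: "t\<^sup>2 > 0" by simp
  have u: "u = h0*(b-a)/c" unfolding u_def q2 using c by (simp add: field_simps c_def)
  have at_b: "h0 - q*b = - u" unfolding u q2 using c by (simp add: field_simps c_def)
  have at_q: "worst_edge a b s h0 q = u\<^sup>2 + q\<^sup>2 * s\<^sup>2"
    unfolding worst_edge_def at_b u_def by (simp add: power2_commute)
  have branch_a: "(h0-p*a)\<^sup>2 + p\<^sup>2 * s\<^sup>2 = u\<^sup>2 + q\<^sup>2 * s\<^sup>2 + t*(2*(q * s\<^sup>2 - a*u)) + (a\<^sup>2+s\<^sup>2)*t\<^sup>2"
    unfolding u_def t_def by (simp add: algebra_simps power2_eq_square)
  have "(h0-p*b)\<^sup>2 + p\<^sup>2 * s\<^sup>2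
      = (h0-q*b)\<^sup>2 + q\<^sup>2 * s\<^sup>2 + t*(2*(q * s\<^sup>2 - b*(h0-q*b))) + (b\<^sup>2+s\<^sup>2)*t\<^sup>2"
    unfolding t_def by (simp add: algebra_simps power2_eq_square)
  hence branch_b: "(h0-p*b)\<^sup>2 + p\<^sup>2 * s\<^sup>2 = u\<^sup>2 + q\<^sup>2 * s\<^sup>2 + t*(2*(q * s\<^sup>2 + b*u)) + (b\<^sup>2+s\<^sup>2)*t\<^sup>2"
    using at_b by simp
  define al where "al = 2*(2 * s\<^sup>2 - a*(b-a))/c"
  define be where "be = 2*(2 * s\<^sup>2 + b*(b-a))/c"
  have slope_a: "2*(q * s\<^sup>2 - a*u) = h0*al" unfolding al_def u q2 using c by (simp add: field_simps)
  have slope_b: "2*(q * s\<^sup>2 + b*u) = h0*be" unfolding be_def u q2 using c by (simp add: field_simps)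
  have al: "al < 0"
    unfolding al_def using c assms by (simp add: divide_neg_pos algebra_simps power2_eq_square)
  have be: "be > 0"
    unfolding be_def using c assms by (intro divide_pos_pos) (auto intro!: add_pos_nonneg)
  show ?thesis
  proof (cases "h0*t > 0")
    case True
    hence "0 < t*(2*(q * s\<^sup>2 + b*u))" unfolding slope_b using be
      by (metis mult.assoc mult.commute zero_less_mult_iff)
    moreover have "(b\<^sup>2+s\<^sup>2)*t\<^sup>2 > 0" using t2 assms by (intro mult_pos_pos add_pos_nonneg) auto
    ultimately show ?thesis using branch_b at_q unfolding worst_edge_def by linarith
  next
    case False
    hence "0 \<le> t*(2*(q * s\<^sup>2 - a*u))" unfolding slope_a using al
      by (metis mult.assoc mult.commute mult_nonpos_nonpos not_less less_imp_le)
    moreover have "(a\<^sup>2+s\<^sup>2)*t\<^sup>2 > 0" using t2 assms by (intro mult_pos_pos add_pos_nonneg) auto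
    ultimately show ?thesis using branch_a at_q unfolding worst_edge_def by linarith
  qed
qed

lemma opt_pi_strict_min:
  fixes a b s h0 p :: real
  assumes "0 < a" "a < b" "0 < s" "p \<noteq> opt_pi a b s h0"
  shows "worst_edge a b s h0 (opt_pi a b s h0) < worst_edge a b s h0 p"
proof (cases "b * a - 2 * s\<^sup>2 \<le> a\<^sup>2")
  case True
  thus ?thesis using assms by (intro worst_edge_strict_min_left) (auto simp: opt_pi_def)
next
  case False
  thus ?thesis using assms by (intro worst_edge_strict_min_mid) (auto simp: opt_pi_def)
qed


section \<open>Probability measures on the domain\<close>

lemma space_probs_on:
  assumes "\<nu> \<in> probs_on D"
  shows "space \<nu> = D"
  using assms sets_eq_imp_space_eq[of \<nu> "restrict_space borel D"]
  by (simp add: probs_on_def space_restrict_space)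

lemma borel_measurable_probs_on:
  fixes f :: "real \<times> real \<Rightarrow> real"
  assumes "\<nu> \<in> probs_on D" "f \<in> borel_measurable borel"
  shows "f \<in> borel_measurable \<nu>"
proof -
  have "f \<in> borel_measurable (restrict_space borel D)"
    using assms(2) by (rule measurable_restrict_space1)
  moreover have "sets \<nu> = sets (restrict_space borel D)" using assms(1) by (simp add: probs_on_def)
  ultimately show ?thesis using measurable_cong_sets by blast
qed

lemma integrable_probs_on_compact:
  fixes f :: "real \<times> real \<Rightarrow> real"
  assumes "\<nu> \<in> probs_on D" "compact D" "continuous_on UNIV f"
  shows "integrable \<nu> f"
proof -
  interpret prob_space \<nu> using assms(1) by (simp add: probs_on_def)
  have "continuous_on D f" using assms(3) continuous_on_subset by blast
  hence "bounded (f ` D)" using assms(2) compact_continuous_image compact_imp_bounded by blast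
  then obtain B where B: "\<And>x. x \<in> D \<Longrightarrow> norm (f x) \<le> B" by (auto simp: bounded_iff)
  show ?thesis
  proof (rule integrable_const_bound)
    show "AE x in \<nu>. norm (f x) \<le> B" using B space_probs_on[OF assms(1)] by (intro AE_I2) auto
    show "f \<in> borel_measurable \<nu>"
      by (rule borel_measurable_probs_on[OF assms(1) borel_measurable_continuous_onI[OF assms(3)]])
  qed
qed

lemma integral_probs_on_le:
  fixes f :: "real \<times> real \<Rightarrow> real"
  assumes "\<nu> \<in> probs_on D" "integrable \<nu> f" "\<And>x. x \<in> D \<Longrightarrow> f x \<le> c"
  shows "(\<integral>x. f x \<partial>\<nu>) \<le> c"
proof -
  interpret prob_space \<nu> using assms(1) by (simp add: probs_on_def)
  have "(\<integral>x. f x \<partial>\<nu>) \<le> (\<integral>x. c \<partial>\<nu>)"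
    using assms space_probs_on[OF assms(1)] by (intro integral_mono) auto
  thus ?thesis by (simp add: prob_space)
qed

lemma integral_probs_on_ge:
  fixes f :: "real \<times> real \<Rightarrow> real"
  assumes "\<nu> \<in> probs_on D" "integrable \<nu> f" "\<And>x. x \<in> D \<Longrightarrow> c \<le> f x"
  shows "c \<le> (\<integral>x. f x \<partial>\<nu>)"
  using integral_probs_on_le[of \<nu> D "\<lambda>x. - f x" "- c"] assms by simp

lemma compact_Dom: "compact (Dom a b sm sp)"
  unfolding Dom_def by (intro compact_Times compact_Icc)

section \<open>A lower bound for the ratio in terms of the mean\<close>

text \<open>The least ratio achievable by measures on D whose mu-marginal has mean m, divided by h0^2.\<close>
definition mean_bound :: "real \<Rightarrow> real \<Rightarrow> real \<Rightarrow> real \<Rightarrow> real" where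
  "mean_bound a b s m = m\<^sup>2 / ((a + b) * m - a * b + s\<^sup>2)"

text \<open>Moment bounds: with m the mean of mu, a \<le> m \<le> b,  a^2 \<le> E[mu^2] \<le> (a+b) m - a b
  (because (mu - a)(b - mu) \<ge> 0 on D) and  0 \<le> E[sigma^2] \<le> sp^2.\<close>
lemma ratio_ge_mean_bound:
  fixes a b sm sp h0 :: real
  assumes "0 < a" "a < b" "0 < sm" "sm < sp" and \<nu>: "\<nu> \<in> probs_on (Dom a b sm sp)"
  shows "\<exists>m. a \<le> m \<and> m \<le> b \<and> h0\<^sup>2 * mean_bound a b sp m \<le> ratio h0 \<nu>"
proof -
  let ?D = "Dom a b sm sp"
  have int: "integrable \<nu> f" if "continuous_on UNIV f" for f :: "real \<times> real \<Rightarrow> real"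
    using \<nu> compact_Dom that by (rule integrable_probs_on_compact)
  have i1: "integrable \<nu> fst" and i2: "integrable \<nu> (\<lambda>x. (fst x)\<^sup>2)"
    and i3: "integrable \<nu> (\<lambda>x. (snd x)\<^sup>2)"
    by (auto intro!: int continuous_intros)
  have on_D: "a \<le> fst x" "fst x \<le> b" "sm \<le> snd x" "snd x \<le> sp" if "x \<in> ?D" for x
    using that by (auto simp: Dom_def)
  define m where "m = (\<integral>x. fst x \<partial>\<nu>)"
  define Q where "Q = (\<integral>x. (fst x)\<^sup>2 \<partial>\<nu>)"
  define S where "S = (\<integral>x. (snd x)\<^sup>2 \<partial>\<nu>)"
  have m: "a \<le> m" "m \<le> b" unfolding m_def
    using integral_probs_on_ge[OF \<nu> i1] integral_probs_on_le[OF \<nu> i1] on_D by blast+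
  have "a\<^sup>2 \<le> (fst x)\<^sup>2" if "x \<in> ?D" for x
    using on_D[OF that] assms by (intro power_mono) auto
  hence Q_lower: "a\<^sup>2 \<le> Q" unfolding Q_def by (rule integral_probs_on_ge[OF \<nu> i2])
  have S_nonneg: "0 \<le> S" unfolding S_def by (rule integral_probs_on_ge[OF \<nu> i3]) simp
  have "(snd x)\<^sup>2 \<le> sp\<^sup>2" if "x \<in> ?D" for x
    using on_D[OF that] assms by (intro power_mono) auto
  hence S_upper: "S \<le> sp\<^sup>2" unfolding S_def by (rule integral_probs_on_le[OF \<nu> i3])
  have Q_upper: "Q \<le> (a+b)*m - a*b"
  proof -
    interpret prob_space \<nu> using \<nu> by (simp add: probs_on_def)
    have "Q \<le> (\<integral>x. (a+b) * fst x - a*b \<partial>\<nu>)" unfolding Q_def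
    proof (rule integral_mono[OF i2])
      show "integrable \<nu> (\<lambda>x. (a+b) * fst x - a*b)" using i1 by simp
      fix x assume "x \<in> space \<nu>"
      hence "0 \<le> (fst x - a) * (b - fst x)" using on_D space_probs_on[OF \<nu>] by simp
      thus "(fst x)\<^sup>2 \<le> (a+b) * fst x - a*b" by (simp add: power2_eq_square algebra_simps)
    qed
    also have "\<dots> = (a+b)*m - a*b" unfolding m_def using i1 by (simp add: prob_space)
    finally show ?thesis .
  qed
  have denom: "(\<integral>x. (fst x)\<^sup>2 + (snd x)\<^sup>2 \<partial>\<nu>) = Q + S" unfolding Q_def S_def using i2 i3 by simp
  have "0 < Q + S" using Q_lower S_nonneg assms by (smt (verit) zero_less_power)
  hence "(h0*m)\<^sup>2 / ((a+b)*m - a*b + sp\<^sup>2) \<le> (h0*m)\<^sup>2 / (Q + S)"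
    using Q_upper S_upper by (intro divide_left_mono) auto
  hence "h0\<^sup>2 * mean_bound a b sp m \<le> ratio h0 \<nu>"
    unfolding ratio_def denom mean_bound_def m_def by (simp add: power_mult_distrib)
  thus ?thesis using m by blast
qed


text \<open>Conversely, every value h0^2 * mean_bound(m) is the ratio of the two-point measure on
  the corners (a,sp) and (b,sp) with mean m: both points lie on the parabola
  mu^2 = (a+b) mu - a b, so the moment bound is attained with equality.\<close>
lemma two_point_attains_mean_bound:
  fixes a b sm sp h0 m :: real
  assumes "0 < a" "a < b" "0 < sm" "sm < sp" "a \<le> m" "m \<le> b"
  shows "\<exists>\<nu>\<in>probs_on (Dom a b sm sp). ratio h0 \<nu> = h0\<^sup>2 * mean_bound a b sp m"
proof -
  let ?D = "Dom a b sm sp"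
  let ?g = "\<lambda>c. if c then (b,sp) else (a,sp)"
  define p where "p = (m - a) / (b - a)"
  have p: "0 \<le> p" "p \<le> 1" unfolding p_def using assms by auto
  have mean: "p*b + (1-p)*a = m"
  proof -
    have "p*(b-a) = m - a" unfolding p_def using assms by simp
    thus ?thesis by (simp add: algebra_simps)
  qed
  have second: "p*(b\<^sup>2+sp\<^sup>2) + (1-p)*(a\<^sup>2+sp\<^sup>2) = (a+b)*m - a*b + sp\<^sup>2"
    unfolding mean[symmetric] by (simp add: algebra_simps power2_eq_square)
  define \<nu> where "\<nu> = distr (measure_pmf (bernoulli_pmf p)) (restrict_space borel ?D) ?g"
  have g: "?g \<in> measurable (measure_pmf (bernoulli_pmf p)) (restrict_space borel ?D)"
    using assms by (auto simp: space_restrict_space Dom_def)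
  have "prob_space \<nu>" unfolding \<nu>_def
    by (rule prob_space.prob_space_distr[OF prob_space_measure_pmf g])
  hence \<nu>_on_D: "\<nu> \<in> probs_on ?D" unfolding probs_on_def \<nu>_def by simp
  have meas: "f \<in> borel_measurable (restrict_space borel ?D)" if "continuous_on UNIV f"
    for f :: "real \<times> real \<Rightarrow> real"
    by (rule measurable_restrict_space1) (rule borel_measurable_continuous_onI[OF that])
  have num: "(\<integral>x. h0 * fst x \<partial>\<nu>) = h0 * (p*b + (1-p)*a)" unfolding \<nu>_def
    by (subst integral_distr[OF g meas]) (auto intro!: continuous_intros simp: p algebra_simps)
  have den: "(\<integral>x. (fst x)\<^sup>2 + (snd x)\<^sup>2 \<partial>\<nu>) = p*(b\<^sup>2+sp\<^sup>2) + (1-p)*(a\<^sup>2+sp\<^sup>2)" unfolding \<nu>_def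
    by (subst integral_distr[OF g meas]) (auto intro!: continuous_intros simp: p algebra_simps)
  have "ratio h0 \<nu> = h0\<^sup>2 * mean_bound a b sp m"
    unfolding ratio_def num den mean second mean_bound_def by (simp add: power_mult_distrib)
  thus ?thesis using \<nu>_on_D by blast
qed

section \<open>Minimising the mean bound over [a, b]\<close>

definition opt_val :: "real \<Rightarrow> real \<Rightarrow> real \<Rightarrow> real \<Rightarrow> real" where
  "opt_val a b s h0 = (if b * a - 2 * s\<^sup>2 \<le> a\<^sup>2 then h0\<^sup>2 * a\<^sup>2 / (a\<^sup>2 + s\<^sup>2)
                       else (b * a - s\<^sup>2) / ((b + a) / 2)\<^sup>2 * h0\<^sup>2)"

lemma mean_bound_denom_ge:
  fixes a b s m :: real
  assumes "0 < a" "a < b" "a \<le> m"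
  shows "a\<^sup>2 + s\<^sup>2 \<le> (a + b) * m - a * b + s\<^sup>2"
proof -
  have "(a + b) * a \<le> (a + b) * m" using assms by (intro mult_left_mono) auto
  thus ?thesis by (simp add: power2_eq_square algebra_simps)
qed

lemma mean_bound_at_left: "mean_bound a b s a = a\<^sup>2 / (a\<^sup>2 + s\<^sup>2)"
  unfolding mean_bound_def by (simp add: algebra_simps power2_eq_square)

text \<open>First regime: mean_bound never drops below its value at m = a, because
  (m - a) ((a^2 + s^2) m - a^2 b + a s^2) \<ge> 0 for m \<ge> a.\<close>
lemma mean_bound_min_left:
  fixes a b s m :: real
  assumes "0 < a" "a < b" "a \<le> m" "b * a - 2 * s\<^sup>2 \<le> a\<^sup>2"
  shows "a\<^sup>2 / (a\<^sup>2 + s\<^sup>2) \<le> mean_bound a b s m"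
proof -
  define L where "L = (a + b) * m - a * b + s\<^sup>2"
  have X: "a\<^sup>2 + s\<^sup>2 > 0" using assms by (simp add: add_pos_nonneg)
  have L: "L > 0" using mean_bound_denom_ge[OF assms(1-3), of s] X unfolding L_def by linarith
  have "0 \<le> a * (a\<^sup>2 + 2 * s\<^sup>2 - a * b)"
    using assms by (intro mult_nonneg_nonneg) (auto simp: mult.commute)
  moreover have "(a\<^sup>2 + s\<^sup>2) * a \<le> (a\<^sup>2 + s\<^sup>2) * m" using X assms by (intro mult_left_mono) auto
  ultimately have "0 \<le> (a\<^sup>2 + s\<^sup>2) * m - a\<^sup>2 * b + a * s\<^sup>2"
    by (simp add: power2_eq_square algebra_simps)
  hence "0 \<le> (m - a) * ((a\<^sup>2 + s\<^sup>2) * m - a\<^sup>2 * b + a * s\<^sup>2)" using assms by simp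
  also have "\<dots> = m\<^sup>2 * (a\<^sup>2 + s\<^sup>2) - a\<^sup>2 * L"
    unfolding L_def by (simp add: power2_eq_square algebra_simps)
  finally show ?thesis using X L unfolding mean_bound_def L_def[symmetric] by (simp add: divide_simps)
qed

text \<open>In general, with c = a + b and d = a b - s^2, mean_bound(m) = m^2 / (c m - d) is at least
  its value 4 d / c^2 at the critical point m = 2 d / c, since (c m - 2 d)^2 \<ge> 0.\<close>
lemma mean_bound_min_vertex:
  fixes a b s m :: real
  assumes "0 < a" "a < b" "a \<le> m"
  shows "(b * a - s\<^sup>2) / ((b + a) / 2)\<^sup>2 \<le> mean_bound a b s m"
proof -
  define c where "c = a + b"
  define d where "d = a * b - s\<^sup>2"
  have c: "c > 0" unfolding c_def using assms by simp
  have "c * m - d \<ge> a\<^sup>2 + s\<^sup>2"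
    using mean_bound_denom_ge[OF assms] unfolding c_def d_def by simp
  hence cmd: "c * m - d > 0" using assms by (smt (verit) zero_le_power2 zero_less_power)
  have "(c * m - 2 * d)\<^sup>2 = m\<^sup>2 * c\<^sup>2 - 4 * d * (c * m - d)" by (simp add: power2_eq_square algebra_simps)
  hence "4 * d * (c * m - d) \<le> m\<^sup>2 * c\<^sup>2" by (metis diff_ge_0_iff_ge zero_le_power2)
  hence "4 * d / c\<^sup>2 \<le> m\<^sup>2 / (c * m - d)" using c cmd by (simp add: divide_simps mult.commute)
  moreover have "(b * a - s\<^sup>2) / ((b + a) / 2)\<^sup>2 = 4 * d / c\<^sup>2"
    unfolding c_def d_def by (simp add: power_divide algebra_simps)
  moreover have "mean_bound a b s m = m\<^sup>2 / (c * m - d)"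
    unfolding mean_bound_def c_def d_def by (simp add: algebra_simps)
  ultimately show ?thesis by simp
qed

lemma opt_val_le_mean_bound:
  fixes a b s h0 m :: real
  assumes "0 < a" "a < b" "a \<le> m"
  shows "opt_val a b s h0 \<le> h0\<^sup>2 * mean_bound a b s m"
proof (cases "b * a - 2 * s\<^sup>2 \<le> a\<^sup>2")
  case True
  hence "opt_val a b s h0 = h0\<^sup>2 * (a\<^sup>2 / (a\<^sup>2 + s\<^sup>2))" unfolding opt_val_def by simp
  also have "\<dots> \<le> h0\<^sup>2 * mean_bound a b s m"
    using mean_bound_min_left[OF assms True] by (intro mult_left_mono) auto
  finally show ?thesis .
next
  case False
  hence "opt_val a b s h0 = h0\<^sup>2 * ((b * a - s\<^sup>2) / ((b + a) / 2)\<^sup>2)" unfolding opt_val_def by simp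
  also have "\<dots> \<le> h0\<^sup>2 * mean_bound a b s m"
    using mean_bound_min_vertex[OF assms] by (intro mult_left_mono) auto
  finally show ?thesis .
qed

text \<open>The minimum of the mean bound lies in [a, b]: at m = a in the first regime, at the
  critical point m = 2 (a b - s^2) / (a + b) in the second.\<close>
lemma opt_val_attained:
  fixes a b sm sp h0 :: real
  assumes "0 < a" "a < b" "0 < sm" "sm < sp"
  shows "\<exists>\<nu>\<in>probs_on (Dom a b sm sp). ratio h0 \<nu> = opt_val a b sp h0"
proof (cases "b * a - 2 * sp\<^sup>2 \<le> a\<^sup>2")
  case True
  have "opt_val a b sp h0 = h0\<^sup>2 * mean_bound a b sp a"
    using True unfolding opt_val_def mean_bound_at_left by simp
  thus ?thesis using two_point_attains_mean_bound[OF assms, of a h0] assms by simp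
next
  case False
  define c where "c = a + b"
  define d where "d = a * b - sp\<^sup>2"
  define m where "m = 2 * d / c"
  have c: "c > 0" unfolding c_def using assms by simp
  have "a * c < 2 * d" using False unfolding c_def d_def by (simp add: algebra_simps power2_eq_square)
  hence m_left: "a < m" unfolding m_def using c by (simp add: field_simps)
  hence d: "d > 0" unfolding m_def using c assms by (smt (verit) divide_nonpos_pos)
  have "2 * d \<le> b * c"
    unfolding c_def d_def using assms by (simp add: algebra_simps power2_eq_square) (smt (verit) mult_strict_right_mono zero_le_mult_iff)
  hence m_right: "m \<le> b" unfolding m_def using c by (simp add: field_simps)
  have "c * m = 2 * d" unfolding m_def using c by simp
  hence "(a + b) * m - a * b + sp\<^sup>2 = d" unfolding c_def d_def by simp
  hence "mean_bound a b sp m = (2 * d / c)\<^sup>2 / d" unfolding mean_bound_def m_def by simp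
  also have "\<dots> = 4 * d / c\<^sup>2" using c d by (simp add: power2_eq_square field_simps)
  also have "\<dots> = (b * a - sp\<^sup>2) / ((b + a) / 2)\<^sup>2"
    unfolding c_def d_def by (simp add: power_divide algebra_simps)
  finally have "opt_val a b sp h0 = h0\<^sup>2 * mean_bound a b sp m"
    using False unfolding opt_val_def by simp
  thus ?thesis using two_point_attains_mean_bound[OF assms, of m h0] m_left m_right by simp
qed


theorem mainTheorem8:
  fixes mu_m mu_p s_m s_p h0 h1 :: real
  assumes "0 < mu_m" "mu_m < mu_p" "0 < s_m" "s_m < s_p"
    and "h1 = 0"
  defines "D \<equiv> Dom mu_m mu_p s_m s_p"
    and "V \<equiv> (if mu_p * mu_m - 2 * s_p\<^sup>2 \<le> mu_m\<^sup>2
              then h0\<^sup>2 * mu_m\<^sup>2 / (mu_m\<^sup>2 + s_p\<^sup>2)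
              else (mu_p * mu_m - s_p\<^sup>2) / ((mu_p + mu_m) / 2)\<^sup>2 * h0\<^sup>2)"
    and "\<pi>s \<equiv> (if mu_p * mu_m - 2 * s_p\<^sup>2 \<le> mu_m\<^sup>2
              then h0 * mu_m / (mu_m\<^sup>2 + s_p\<^sup>2)
              else h0 / ((mu_p + mu_m) / 2))"
  shows "(\<forall>\<nu>\<in>probs_on D. V \<le> ratio h0 \<nu>) \<and> (\<exists>\<nu>\<in>probs_on D. ratio h0 \<nu> = V)
       \<and> (\<forall>\<pi>. worst h0 h1 D \<pi>s \<le> worst h0 h1 D \<pi>)
       \<and> (\<forall>\<pi>. worst h0 h1 D \<pi> = worst h0 h1 D \<pi>s \<longrightarrow> \<pi> = \<pi>s)"
proof -
  note ab = assms(1,2) and dom = assms(1-4)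
  have V: "V = opt_val mu_m mu_p s_p h0" unfolding V_def opt_val_def ..
  have \<pi>s: "\<pi>s = opt_pi mu_m mu_p s_p h0" unfolding \<pi>s_def opt_pi_def ..
  have W: "worst h0 h1 D p = worst_edge mu_m mu_p s_p h0 p" for p
    unfolding D_def assms(5) by (rule worst_Dom[OF dom])
  have lower: "V \<le> ratio h0 \<nu>" if \<nu>: "\<nu> \<in> probs_on D" for \<nu>
  proof -
    obtain m where "mu_m \<le> m" "m \<le> mu_p" "h0\<^sup>2 * mean_bound mu_m mu_p s_p m \<le> ratio h0 \<nu>"
      using ratio_ge_mean_bound[OF dom \<nu>[unfolded D_def]] by blast
    thus ?thesis using opt_val_le_mean_bound[OF ab, of m s_p h0] unfolding V by linarith
  qed
  have attained: "\<exists>\<nu>\<in>probs_on D. ratio h0 \<nu> = V"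
    unfolding V D_def by (rule opt_val_attained[OF dom])
  have strict: "worst h0 h1 D \<pi>s < worst h0 h1 D p" if "p \<noteq> \<pi>s" for p
    using opt_pi_strict_min[OF ab, of s_p p h0] that dom unfolding W \<pi>s by simp
  show ?thesis using lower attained strict by (metis less_le_not_le nle_le)
qed

end
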